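(* In the two-SP bandwidth game with minimum small-cell bandwidth constraints $B_{i,S}\ge B_{i,S}^0$ (described in the context), there exists a unique pure-strategy Nash equilibrium $(B_{1,S}^*,B_{2,S}^* )$. Moreover, the total small-cell bandwidth at this equilibrium is no less than that at the unconstrained equilibrium: $$B_{1,S}^*+B_{2,S}^*\ \ge\ B_{1,S}^{\mathrm{free}}+B_{2,S}^{\mathrm{free}}=\frac{\epsilon N_f(B_1+B_2)}{\epsilon N_f+N_m}.$$
   Context: Fixed parameters: $\alpha\in(0,1)$; densities $N_m>0$ (mobile users) and $N_f>0$ (fixed users); spectral efficiency $R_0>0$; common small-cell density $\lambda_S>1$ (macro density normalized to 1); total bandwidths $B_1,B_2>0$; regulatory lower bounds $B_{i,S}^0\in[0,B_i]$. Utility $u(r)=\frac{r^{1-\alpha}}{1-\alpha}$, $u'(r)=r^{-\alpha}$. Let $\epsilon=\lambda_S^{1/\alpha-1}$. Two-SP bandwidth game: SP $i\in\{1,2\}$ chooses small-cell bandwidth $B_{i,S}\in[B_{i,S}^0,B_i]$ and sets $B_{i,M}=B_i-B_{i,S}$. Given a profile, prices are market-clearing, mobile users use macro-cells and fixed users use small-cells, so the average rates are $R_S=\frac{\lambda_S(B_{1,S}+B_{2,S})R_0}{N_f}$ and $R_M=\frac{(B_{1,M}+B_{2,M})R_0}{N_m}$, and SP $i$'s payoff (revenue) is $S_i=R_0B_{i,M}R_M^{-\alpha}+R_0\lambda_SB_{i,S}R_S^{-\alpha}$ (a term with zero bandwidth is $0$). Define $B_{i,S}^{\mathrm{free}}=\frac{\epsilon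 N_fB_i}{\epsilon N_f+N_m}$, the equilibrium small-cell bandwidth of SP $i$ when there are no constraints ($B_{i,S}^0=0$). *)

theory Defs
  imports Complex_Main
begin

text \<open>Parameters: alpha, Nm (mobile user density), Nf (fixed user
density), R0 (spectral efficiency), lamS (small-cell density), B1, B2 (total bandwidths).
Strategies: x1 = B_{1,S}, x2 = B_{2,S}; macro bandwidths are B_i - x_i.\<close>

definition rate_S :: "real \<Rightarrow> real \<Rightarrow> real \<Rightarrow> real \<Rightarrow> real \<Rightarrow> real" where
  "rate_S Nf R0 lamS x1 x2 = lamS * (x1 + x2) * R0 / Nf"

definition rate_M :: "real \<Rightarrow> real \<Rightarrow> real \<Rightarrow> real \<Rightarrow> real \<Rightarrow> real \<Rightarrow> real" where
  "rate_M Nm R0 B1 B2 x1 x2 = ((B1 - x1) + (B2 - x2)) * R0 / Nm"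

definition revenue :: "real \<Rightarrow> real \<Rightarrow> real \<Rightarrow> real \<Rightarrow> real \<Rightarrow> real \<Rightarrow> real \<Rightarrow> real" where
  "revenue alpha R0 lamS RM RS xm xs =
     (if xm = 0 then 0 else R0 * xm * RM powr (- alpha))
   + (if xs = 0 then 0 else R0 * lamS * xs * RS powr (- alpha))"

definition payoff1 :: "real \<Rightarrow> real \<Rightarrow> real \<Rightarrow> real \<Rightarrow> real \<Rightarrow> real \<Rightarrow> real \<Rightarrow> real \<Rightarrow> real \<Rightarrow> real" where
  "payoff1 alpha Nm Nf R0 lamS B1 B2 x1 x2 =
     revenue alpha R0 lamS (rate_M Nm R0 B1 B2 x1 x2) (rate_S Nf R0 lamS x1 x2) (B1 - x1) x1"

definition payoff2 :: "real \<Rightarrow> real \<Rightarrow> real \<Rightarrow> real \<Rightarrow> real \<Rightarrow> real \<Rightarrow> real \<Rightarrow> real \<Rightarrow> real \<Rightarrow> real" where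
  "payoff2 alpha Nm Nf R0 lamS B1 B2 x1 x2 =
     revenue alpha R0 lamS (rate_M Nm R0 B1 B2 x1 x2) (rate_S Nf R0 lamS x1 x2) (B2 - x2) x2"

definition is_NE :: "real \<Rightarrow> real \<Rightarrow> real \<Rightarrow> real \<Rightarrow> real \<Rightarrow> real \<Rightarrow> real \<Rightarrow> real \<Rightarrow> real \<Rightarrow> real \<times> real \<Rightarrow> bool" where
  "is_NE alpha Nm Nf R0 lamS B1 B2 B10 B20 p \<longleftrightarrow>
     (case p of (x1, x2) \<Rightarrow>
       x1 \<in> {B10..B1} \<and> x2 \<in> {B20..B2} \<and>
       (\<forall>y \<in> {B10..B1}. payoff1 alpha Nm Nf R0 lamS B1 B2 y x2 \<le> payoff1 alpha Nm Nf R0 lamS B1 B2 x1 x2) \<and>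
       (\<forall>y \<in> {B20..B2}. payoff2 alpha Nm Nf R0 lamS B1 B2 x1 y \<le> payoff2 alpha Nm Nf R0 lamS B1 B2 x1 x2))"

definition eps_param :: "real \<Rightarrow> real \<Rightarrow> real" where
  "eps_param alpha lamS = lamS powr (1 / alpha - 1)"

definition B_free :: "real \<Rightarrow> real \<Rightarrow> real \<Rightarrow> real \<Rightarrow> real \<Rightarrow> real" where
  "B_free alpha Nm Nf lamS Bi = eps_param alpha lamS * Nf * Bi / (eps_param alpha lamS * Nf + Nm)"

end

theory Submission
  imports Defs
begin

text \<open>After dividing by \<open>R\<^sub>0\<close>, a provider's revenue is concave in its own small-cell bandwidth,
  so best replies are characterised by the first-order conditions, and its marginal revenue strictly
  decreases when its own small-cell share or the small-cell total grows. Comparing two equilibria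
  with these monotonicity properties rules out all but one. Existence follows from the intermediate
  value theorem applied to the total small-cell bandwidth, each provider's first-order condition
  being affine in its own bandwidth once the total is fixed. Finally, below full small-cell use the
  small-cell price never exceeds the macro-cell price at equilibrium, while the unconstrained
  equilibrium total is exactly where the two prices agree; as the price gap decreases in the total,
  the constrained total is at least the unconstrained one.\<close>

lemma continuous_on_times_powr_neg:
  fixes a c :: real
  assumes "a < 1" "0 \<le> c"
  shows "continuous_on {0..} (\<lambda>u. u * (u + c) powr (-a))"
proof (cases "c = 0")
  case True
  have "continuous_on {0..} (\<lambda>u::real. u powr (1 - a))"
    using assms(1) by (intro continuous_on_powr') (auto intro!: continuous_intros)
  moreover have "u powr (1 - a) = u * (u + c) powr (-a)" if "u \<in> {0..}" for u :: real
    using True that by (cases "u = 0") (auto simp: powr_diff powr_minus divide_inverse)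
  ultimately show ?thesis
    using continuous_on_cong[of "{0..}" "{0..}" "\<lambda>u. u powr (1 - a)" "\<lambda>u. u * (u + c) powr (-a)"]
    by simp
next
  case False
  with assms(2) show ?thesis by (auto intro!: continuous_intros)
qed

lemma powr_neg_exceeds_near_zero:
  fixes a c r :: real
  assumes "0 < a" "0 < r"
  obtains t where "0 < t" "t < r" "c < t powr (-a)"
proof -
  define c' where "c' = max c 1"
  define t where "t = min (r / 2) (c' powr (-1 / a) / 2)"
  have c': "0 < c'" "c \<le> c'" unfolding c'_def by auto
  have t: "0 < t" "t < r" "t < c' powr (-1 / a)"
    using assms c' unfolding t_def by (auto simp: min_def)
  have "c' = (c' powr (-1 / a)) powr (-a)"
    using assms c' by (simp add: powr_powr)
  also have "\<dots> < t powr (-a)"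
    using t assms by (intro powr_less_mono2_neg) auto
  finally show ?thesis using that t c' by simp
qed

lemma share_mono:
  fixes t t' c :: real
  assumes "0 \<le> t" "t \<le> t'" "0 \<le> c" "0 < t + c"
  shows "t / (t + c) \<le> t' / (t' + c)"
proof -
  have "t * (t' + c) \<le> t' * (t + c)" using assms by (simp add: algebra_simps mult_left_mono)
  with assms show ?thesis by (simp add: divide_simps)
qed

text \<open>Normalised game: a provider with total bandwidth \<open>B\<close> puts \<open>y\<close> into small cells
  while its rival, with total \<open>B'\<close>, puts \<open>x'\<close> there. Its revenue divided by \<open>R\<^sub>0\<close> is
  \<open>payoff B y B' x'\<close>, the market-clearing prices being absorbed into \<open>cM\<close> and \<open>cS\<close>.\<close>

locale bandwidth_game =
  fixes a cM cS :: real
  assumes a_pos: "0 < a" and a_less_1: "a < 1" and cM_pos: "0 < cM" and cS_pos: "0 < cS"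
begin

definition payoff :: "real \<Rightarrow> real \<Rightarrow> real \<Rightarrow> real \<Rightarrow> real" where
  "payoff B y B' x' = cM * (B - y) * (B - y + (B' - x')) powr (-a) + cS * y * (y + x') powr (-a)"

text \<open>\<open>S\<close> and \<open>M\<close> are the small-cell and macro-cell totals, \<open>s\<close> and \<open>u\<close> the provider's shares of them.\<close>

definition marginal_of_shares :: "real \<Rightarrow> real \<Rightarrow> real \<Rightarrow> real \<Rightarrow> real" where
  "marginal_of_shares S M s u = cS * S powr (-a) * (1 - a * s) - cM * M powr (-a) * (1 - a * u)"

definition marginal_payoff :: "real \<Rightarrow> real \<Rightarrow> real \<Rightarrow> real \<Rightarrow> real" where
  "marginal_payoff B y B' x' =
     marginal_of_shares (y + x') (B - y + (B' - x')) (y / (y + x')) ((B - y) / (B - y + (B' - x')))"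

lemma has_real_derivative_payoff:
  assumes "0 < y + x'" "0 < B - y + (B' - x')"
  shows "((\<lambda>y. payoff B y B' x') has_real_derivative marginal_payoff B y B' x') (at y)"
proof -
  define M where "M = B - y + (B' - x')"
  have "((\<lambda>y. payoff B y B' x') has_real_derivative
      cM * (- (M powr (-a)) + (B - y) * (a * M powr (-a - 1)))
    + cS * ((y + x') powr (-a) - y * (a * (y + x') powr (-a - 1)))) (at y)"
    unfolding payoff_def M_def using assms
    by (auto intro!: derivative_eq_intros simp: algebra_simps)
  moreover have "M powr (-a - 1) = M powr (-a) / M" "(y + x') powr (-a - 1) = (y + x') powr (-a) / (y + x')"
    using assms by (simp_all add: M_def powr_diff)
  moreover have "cM * (- (M powr (-a)) + (B - y) * (a * (M powr (-a) / M)))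
    + cS * ((y + x') powr (-a) - y * (a * ((y + x') powr (-a) / (y + x')))) = marginal_payoff B y B' x'"
    unfolding marginal_payoff_def marginal_of_shares_def M_def[symmetric]
    using assms by (simp add: M_def field_simps)
  ultimately show ?thesis by simp
qed

lemma continuous_on_payoff:
  assumes "0 \<le> x'" "x' \<le> B'" "0 \<le> lo" "hi \<le> B"
  shows "continuous_on {lo..hi} (\<lambda>y. payoff B y B' x')"
proof -
  have "continuous_on {lo..hi} ((\<lambda>u. u * (u + (B' - x')) powr (-a)) \<circ> (\<lambda>y. B - y))"
    using assms a_less_1
    by (intro continuous_on_compose continuous_on_subset[OF continuous_on_times_powr_neg])
      (auto intro!: continuous_intros)
  moreover have "continuous_on {lo..hi} (\<lambda>y. y * (y + x') powr (-a))"
    using assms a_less_1 by (intro continuous_on_subset[OF continuous_on_times_powr_neg]) auto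
  ultimately show ?thesis
    unfolding payoff_def o_def by (auto intro!: continuous_intros simp: mult.assoc)
qed

lemma price_term_antimono:
  assumes "0 < c" "0 < P" "P \<le> P'" "0 \<le> s" "s \<le> s'" "s' \<le> 1"
  shows "c * P' powr (-a) * (1 - a * s') \<le> c * P powr (-a) * (1 - a * s)"
    and "P < P' \<or> s < s' \<Longrightarrow> c * P' powr (-a) * (1 - a * s') < c * P powr (-a) * (1 - a * s)"
proof -
  have P: "0 < P' powr (-a)" "P' powr (-a) \<le> P powr (-a)"
    using assms a_pos by (auto intro: powr_mono2')
  have "a * s' \<le> a" using assms a_pos by (simp add: mult_left_le)
  moreover have "a * s \<le> a * s'" using assms a_pos by (simp add: mult_left_mono)
  ultimately have s: "0 < 1 - a * s'" "1 - a * s' \<le> 1 - a * s"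
    using a_less_1 by linarith+
  show "c * P' powr (-a) * (1 - a * s') \<le> c * P powr (-a) * (1 - a * s)"
    using P s assms by (simp add: mult.assoc mult_mono)
  assume "P < P' \<or> s < s'"
  then have "P' powr (-a) * (1 - a * s') < P powr (-a) * (1 - a * s)"
  proof
    assume "P < P'"
    then have "P' powr (-a) < P powr (-a)"
      using assms a_pos by (intro powr_less_mono2_neg) auto
    then show ?thesis using P s by (intro mult_less_le_imp_less) auto
  next
    assume "s < s'"
    then have "1 - a * s' < 1 - a * s" using a_pos by simp
    then show ?thesis using P s by (intro mult_le_less_imp_less) auto
  qed
  then show "c * P' powr (-a) * (1 - a * s') < c * P powr (-a) * (1 - a * s)"
    using assms by (simp add: mult.assoc)
qed

lemma marginal_of_shares_less:
  assumes "0 < S" "S \<le> S'" "0 < M'" "M' \<le> M" "0 \<le> s" "s \<le> s'" "s' \<le> 1"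
    "0 \<le> u'" "u' \<le> u" "u \<le> 1"
    and "S < S' \<or> M' < M \<or> s < s' \<or> u' < u"
  shows "marginal_of_shares S' M' s' u' < marginal_of_shares S M s u"
proof -
  note small = price_term_antimono[of cS S S' s s'] and macro = price_term_antimono[of cM M' M u' u]
  from assms(11) consider "S < S' \<or> s < s'" | "M' < M \<or> u' < u" by blast
  then show ?thesis
    using small macro assms cS_pos cM_pos unfolding marginal_of_shares_def
    by cases (smt (verit))+
qed

lemma marginal_payoff_strict_antimono:
  assumes "0 \<le> y\<^sub>1" "y\<^sub>1 < y\<^sub>2" "y\<^sub>2 \<le> B" "0 \<le> x'" "x' \<le> B'"
    "0 < y\<^sub>1 + x'" "0 < B - y\<^sub>2 + (B' - x')"
  shows "marginal_payoff B y\<^sub>2 B' x' < marginal_payoff B y\<^sub>1 B' x'"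
  unfolding marginal_payoff_def
proof (rule marginal_of_shares_less)
  show "y\<^sub>1 / (y\<^sub>1 + x') \<le> y\<^sub>2 / (y\<^sub>2 + x')"
    using assms by (intro share_mono) auto
  show "(B - y\<^sub>2) / (B - y\<^sub>2 + (B' - x')) \<le> (B - y\<^sub>1) / (B - y\<^sub>1 + (B' - x'))"
    using assms share_mono[of "B - y\<^sub>2" "B - y\<^sub>1" "B' - x'"] by simp
qed (use assms in \<open>auto simp: divide_simps\<close>)

lemma marginal_payoff_nonpos_if_max:
  assumes max: "\<forall>y\<in>{L..B}. payoff B y B' x' \<le> payoff B y\<^sub>0 B' x'"
    and "L \<le> y\<^sub>0" "y\<^sub>0 < B" "0 < y\<^sub>0 + x'" "0 < B - y\<^sub>0 + (B' - x')"
  shows "marginal_payoff B y\<^sub>0 B' x' \<le> 0"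
proof (rule ccontr)
  assume "\<not> ?thesis"
  then obtain d where d: "d > 0" "\<And>h. 0 < h \<Longrightarrow> h < d \<Longrightarrow> payoff B y\<^sub>0 B' x' < payoff B (y\<^sub>0 + h) B' x'"
    using DERIV_pos_inc_right[OF has_real_derivative_payoff[OF assms(4,5)]] by auto
  obtain h where "0 < h" "h < d" "h < B - y\<^sub>0"
    using field_lbound_gt_zero[of d "B - y\<^sub>0"] d assms by auto
  then have "0 < h" "h < d" "y\<^sub>0 + h \<in> {L..B}"
    using assms by auto
  then have "payoff B y\<^sub>0 B' x' < payoff B (y\<^sub>0 + h) B' x'" "payoff B (y\<^sub>0 + h) B' x' \<le> payoff B y\<^sub>0 B' x'"
    using d max by blast+
  then show False by linarith
qed

lemma marginal_payoff_nonneg_if_max: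
  assumes max: "\<forall>y\<in>{L..B}. payoff B y B' x' \<le> payoff B y\<^sub>0 B' x'"
    and "L < y\<^sub>0" "y\<^sub>0 \<le> B" "0 < y\<^sub>0 + x'" "0 < B - y\<^sub>0 + (B' - x')"
  shows "0 \<le> marginal_payoff B y\<^sub>0 B' x'"
proof (rule ccontr)
  assume "\<not> ?thesis"
  then obtain d where d: "d > 0" "\<And>h. 0 < h \<Longrightarrow> h < d \<Longrightarrow> payoff B y\<^sub>0 B' x' < payoff B (y\<^sub>0 - h) B' x'"
    using DERIV_neg_dec_left[OF has_real_derivative_payoff[OF assms(4,5)]] by auto
  obtain h where "0 < h" "h < d" "h < y\<^sub>0 - L"
    using field_lbound_gt_zero[of d "y\<^sub>0 - L"] d assms by auto
  then have "0 < h" "h < d" "y\<^sub>0 - h \<in> {L..B}"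
    using assms by auto
  then have "payoff B y\<^sub>0 B' x' < payoff B (y\<^sub>0 - h) B' x'" "payoff B (y\<^sub>0 - h) B' x' \<le> payoff B y\<^sub>0 B' x'"
    using d max by blast+
  then show False by linarith
qed

text \<open>The payoff is concave in the own strategy, so the first-order conditions suffice.\<close>

lemma payoff_max_if_first_order:
  assumes "0 \<le> L" "L \<le> y\<^sub>0" "y\<^sub>0 \<le> B" "0 \<le> x'" "x' \<le> B'" "0 < y\<^sub>0 + x'" "0 < B - y\<^sub>0 + (B' - x')"
    and up: "y\<^sub>0 < B \<Longrightarrow> marginal_payoff B y\<^sub>0 B' x' \<le> 0"
    and down: "L < y\<^sub>0 \<Longrightarrow> 0 \<le> marginal_payoff B y\<^sub>0 B' x'"
  shows "\<forall>y\<in>{L..B}. payoff B y B' x' \<le> payoff B y\<^sub>0 B' x'"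
proof
  fix y assume y: "y \<in> {L..B}"
  have deriv: "DERIV (\<lambda>y. payoff B y B' x') z :> marginal_payoff B z B' x'" if "0 < z" "z < B" for z
    using that assms by (intro has_real_derivative_payoff) auto
  have cont: "continuous_on {lo..hi} (\<lambda>y. payoff B y B' x')" if "L \<le> lo" "hi \<le> B" for lo hi
    using that assms by (intro continuous_on_payoff) auto
  show "payoff B y B' x' \<le> payoff B y\<^sub>0 B' x'"
  proof (cases "y\<^sub>0 \<le> y")
    case True
    show ?thesis
    proof (rule DERIV_nonpos_imp_decreasing_open[OF True _ cont])
      fix z assume z: "y\<^sub>0 < z" "z < y"
      have "marginal_payoff B z B' x' < marginal_payoff B y\<^sub>0 B' x'"
        using z assms y by (intro marginal_payoff_strict_antimono) auto
      moreover have "marginal_payoff B y\<^sub>0 B' x' \<le> 0" using up z y by simp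
      ultimately show "\<exists>D. DERIV (\<lambda>y. payoff B y B' x') z :> D \<and> D \<le> 0"
        using deriv z y assms by (intro exI[of _ "marginal_payoff B z B' x'"]) auto
    qed (use assms y in auto)
  next
    case False
    then have "y \<le> y\<^sub>0" by simp
    then show ?thesis
    proof (rule DERIV_nonneg_imp_increasing_open[OF _ _ cont])
      fix z assume z: "y < z" "z < y\<^sub>0"
      have "marginal_payoff B y\<^sub>0 B' x' < marginal_payoff B z B' x'"
        using z assms y by (intro marginal_payoff_strict_antimono) auto
      moreover have "0 \<le> marginal_payoff B y\<^sub>0 B' x'" using down z y by simp
      ultimately show "\<exists>D. DERIV (\<lambda>y. payoff B y B' x') z :> D \<and> 0 \<le> D"
        using deriv z y assms by (intro exI[of _ "marginal_payoff B z B' x'"]) auto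
    qed (use assms y in auto)
  qed
qed

lemma zero_not_best_reply_to_zero:
  assumes "0 < B" "0 \<le> B'"
  shows "\<exists>y\<in>{0..B}. payoff B 0 B' 0 < payoff B y B' 0"
proof -
  define T where "T = B + B'"
  obtain y where y: "0 < y" "y < B" "cM * T powr (-a) / cS < y powr (-a)"
    using powr_neg_exceeds_near_zero a_pos assms by blast
  have "T powr (-a) \<le> (T - y) powr (-a)"
    using y assms a_pos unfolding T_def by (intro powr_mono2') auto
  then have macro: "cM * (B - y) * T powr (-a) \<le> cM * (B - y) * (T - y) powr (-a)"
    using y cM_pos by (intro mult_left_mono) auto
  have small: "cM * T powr (-a) < cS * y powr (-a)"
    using y cS_pos by (simp add: field_simps)
  have "payoff B 0 B' 0 = cM * (B - y) * T powr (-a) + y * (cM * T powr (-a))"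
    unfolding payoff_def T_def by (simp add: algebra_simps)
  also have "\<dots> < cM * (B - y) * T powr (-a) + y * (cS * y powr (-a))"
    using small y by simp
  also have "\<dots> \<le> payoff B y B' 0"
    using macro unfolding payoff_def T_def by (simp add: algebra_simps)
  finally show ?thesis using y by auto
qed

lemma full_not_best_reply_to_full:
  assumes "0 \<le> L" "L < B" "0 \<le> B'"
  shows "\<exists>y\<in>{L..B}. payoff B B B' B' < payoff B y B' B'"
proof -
  define T where "T = B + B'"
  obtain h where h: "0 < h" "h < B - L" "cS * T powr (-a) / cM < h powr (-a)"
    using powr_neg_exceeds_near_zero a_pos assms by (metis diff_gt_0_iff_gt)
  have "T powr (-a) \<le> (T - h) powr (-a)"
    using h assms a_pos unfolding T_def by (intro powr_mono2') auto
  then have small: "cS * (B - h) * T powr (-a) \<le> cS * (B - h) * (T - h) powr (-a)"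
    using h cS_pos assms by (intro mult_left_mono) auto
  have macro: "cS * T powr (-a) < cM * h powr (-a)"
    using h cM_pos by (simp add: field_simps)
  have "payoff B B B' B' = cS * (B - h) * T powr (-a) + h * (cS * T powr (-a))"
    unfolding payoff_def T_def by (simp add: algebra_simps)
  also have "\<dots> < cS * (B - h) * T powr (-a) + h * (cM * h powr (-a))"
    using macro h by simp
  also have "\<dots> \<le> payoff B (B - h) B' B'"
    using small unfolding payoff_def T_def by (simp add: algebra_simps)
  finally show ?thesis using h by (intro bexI[of _ "B - h"]) auto
qed

definition price_gap :: "real \<Rightarrow> real \<Rightarrow> real" where
  "price_gap T S = cS * S powr (-a) - cM * (T - S) powr (-a)"

lemma price_gap_strict_antimono:
  assumes "0 < S" "S < S'" "S' < T"
  shows "price_gap T S' < price_gap T S"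
proof -
  have "S' powr (-a) < S powr (-a)" "(T - S) powr (-a) < (T - S') powr (-a)"
    using assms a_pos by (auto intro!: powr_less_mono2_neg)
  with cS_pos cM_pos show ?thesis
    unfolding price_gap_def by (smt (verit) mult_strict_left_mono)
qed

lemma marginal_payoff_sum:
  assumes "0 < x + x'" "0 < B - x + (B' - x')"
  shows "marginal_payoff B x B' x' + marginal_payoff B' x' B x = (2 - a) * price_gap (B + B') (x + x')"
proof -
  have s: "x' / (x' + x) = 1 - x / (x + x')"
    and u: "(B' - x') / (B' - x' + (B - x)) = 1 - (B - x) / (B - x + (B' - x'))"
    using assms by (simp_all add: field_simps)
  have "x' + x = x + x'" "B' - x' + (B - x) = B + B' - (x + x')" "B - x + (B' - x') = B + B' - (x + x')"
    by simp_all
  then show ?thesis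
    unfolding marginal_payoff_def s u marginal_of_shares_def price_gap_def by (simp add: algebra_simps)
qed

definition equilibrium :: "real \<Rightarrow> real \<Rightarrow> real \<Rightarrow> real \<Rightarrow> real \<Rightarrow> real \<Rightarrow> bool" where
  "equilibrium B\<^sub>1 B\<^sub>2 L\<^sub>1 L\<^sub>2 x\<^sub>1 x\<^sub>2 \<longleftrightarrow> L\<^sub>1 \<le> x\<^sub>1 \<and> x\<^sub>1 \<le> B\<^sub>1 \<and> L\<^sub>2 \<le> x\<^sub>2 \<and> x\<^sub>2 \<le> B\<^sub>2
     \<and> (\<forall>y\<in>{L\<^sub>1..B\<^sub>1}. payoff B\<^sub>1 y B\<^sub>2 x\<^sub>2 \<le> payoff B\<^sub>1 x\<^sub>1 B\<^sub>2 x\<^sub>2)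
     \<and> (\<forall>y\<in>{L\<^sub>2..B\<^sub>2}. payoff B\<^sub>2 y B\<^sub>1 x\<^sub>1 \<le> payoff B\<^sub>2 x\<^sub>2 B\<^sub>1 x\<^sub>1)"

lemma equilibrium_swap: "equilibrium B\<^sub>1 B\<^sub>2 L\<^sub>1 L\<^sub>2 x\<^sub>1 x\<^sub>2 \<longleftrightarrow> equilibrium B\<^sub>2 B\<^sub>1 L\<^sub>2 L\<^sub>1 x\<^sub>2 x\<^sub>1"
  unfolding equilibrium_def by auto

lemma equilibrium_small_total_pos:
  assumes "equilibrium B\<^sub>1 B\<^sub>2 L\<^sub>1 L\<^sub>2 x\<^sub>1 x\<^sub>2" "0 < B\<^sub>1" "0 \<le> B\<^sub>2" "0 \<le> L\<^sub>1" "0 \<le> L\<^sub>2"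
  shows "0 < x\<^sub>1 + x\<^sub>2"
proof (rule ccontr)
  assume "\<not> ?thesis"
  then have "x\<^sub>1 = 0" "x\<^sub>2 = 0" "L\<^sub>1 = 0" using assms unfolding equilibrium_def by auto
  then show False using zero_not_best_reply_to_zero[of B\<^sub>1 B\<^sub>2] assms unfolding equilibrium_def by force
qed

lemma equilibrium_macro_total_pos:
  assumes "equilibrium B\<^sub>1 B\<^sub>2 L\<^sub>1 L\<^sub>2 x\<^sub>1 x\<^sub>2" "0 \<le> B\<^sub>2" "0 \<le> L\<^sub>1" "L\<^sub>1 < x\<^sub>1"
  shows "0 < B\<^sub>1 - x\<^sub>1 + (B\<^sub>2 - x\<^sub>2)"
proof (rule ccontr)
  assume "\<not> ?thesis"
  then have "x\<^sub>1 = B\<^sub>1" "x\<^sub>2 = B\<^sub>2" using assms unfolding equilibrium_def by auto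
  then show False using full_not_best_reply_to_full[of L\<^sub>1 B\<^sub>1 B\<^sub>2] assms unfolding equilibrium_def by force
qed

lemma equilibrium_first_order:
  assumes "equilibrium B\<^sub>1 B\<^sub>2 L\<^sub>1 L\<^sub>2 x\<^sub>1 x\<^sub>2" "0 < x\<^sub>1 + x\<^sub>2" "0 < B\<^sub>1 - x\<^sub>1 + (B\<^sub>2 - x\<^sub>2)"
  shows "x\<^sub>1 < B\<^sub>1 \<Longrightarrow> marginal_payoff B\<^sub>1 x\<^sub>1 B\<^sub>2 x\<^sub>2 \<le> 0"
    and "L\<^sub>1 < x\<^sub>1 \<Longrightarrow> 0 \<le> marginal_payoff B\<^sub>1 x\<^sub>1 B\<^sub>2 x\<^sub>2"
    and "x\<^sub>2 < B\<^sub>2 \<Longrightarrow> marginal_payoff B\<^sub>2 x\<^sub>2 B\<^sub>1 x\<^sub>1 \<le> 0"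
    and "L\<^sub>2 < x\<^sub>2 \<Longrightarrow> 0 \<le> marginal_payoff B\<^sub>2 x\<^sub>2 B\<^sub>1 x\<^sub>1"
proof -
  have swapped: "0 < x\<^sub>2 + x\<^sub>1" "0 < B\<^sub>2 - x\<^sub>2 + (B\<^sub>1 - x\<^sub>1)" using assms(2,3) by linarith+
  show "x\<^sub>1 < B\<^sub>1 \<Longrightarrow> marginal_payoff B\<^sub>1 x\<^sub>1 B\<^sub>2 x\<^sub>2 \<le> 0"
    using assms unfolding equilibrium_def by (intro marginal_payoff_nonpos_if_max) auto
  show "L\<^sub>1 < x\<^sub>1 \<Longrightarrow> 0 \<le> marginal_payoff B\<^sub>1 x\<^sub>1 B\<^sub>2 x\<^sub>2"
    using assms unfolding equilibrium_def by (intro marginal_payoff_nonneg_if_max) auto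
  show "x\<^sub>2 < B\<^sub>2 \<Longrightarrow> marginal_payoff B\<^sub>2 x\<^sub>2 B\<^sub>1 x\<^sub>1 \<le> 0"
    using assms swapped unfolding equilibrium_def by (intro marginal_payoff_nonpos_if_max) auto
  show "L\<^sub>2 < x\<^sub>2 \<Longrightarrow> 0 \<le> marginal_payoff B\<^sub>2 x\<^sub>2 B\<^sub>1 x\<^sub>1"
    using assms swapped unfolding equilibrium_def by (intro marginal_payoff_nonneg_if_max) auto
qed

lemma equilibrium_total_le_imp_share_ge:
  assumes x: "equilibrium B\<^sub>1 B\<^sub>2 L\<^sub>1 L\<^sub>2 x\<^sub>1 x\<^sub>2" and y: "equilibrium B\<^sub>1 B\<^sub>2 L\<^sub>1 L\<^sub>2 y\<^sub>1 y\<^sub>2"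
    and pos: "0 < B\<^sub>1" "0 < B\<^sub>2" "0 \<le> L\<^sub>1" "0 \<le> L\<^sub>2"
    and le: "x\<^sub>1 + x\<^sub>2 \<le> y\<^sub>1 + y\<^sub>2"
  shows "y\<^sub>1 \<le> x\<^sub>1"
proof (rule ccontr)
  assume "\<not> y\<^sub>1 \<le> x\<^sub>1"
  then have lt: "x\<^sub>1 < y\<^sub>1" by simp
  have bx: "L\<^sub>1 \<le> x\<^sub>1" "x\<^sub>1 \<le> B\<^sub>1" "L\<^sub>2 \<le> x\<^sub>2" "x\<^sub>2 \<le> B\<^sub>2" using x unfolding equilibrium_def by auto
  have "by": "L\<^sub>1 \<le> y\<^sub>1" "y\<^sub>1 \<le> B\<^sub>1" "L\<^sub>2 \<le> y\<^sub>2" "y\<^sub>2 \<le> B\<^sub>2" using y unfolding equilibrium_def by auto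
  have Sx: "0 < x\<^sub>1 + x\<^sub>2" and Sy: "0 < y\<^sub>1 + y\<^sub>2"
    using equilibrium_small_total_pos x y pos by auto
  have Mx: "0 < B\<^sub>1 - x\<^sub>1 + (B\<^sub>2 - x\<^sub>2)" using lt bx "by" by linarith
  have My: "0 < B\<^sub>1 - y\<^sub>1 + (B\<^sub>2 - y\<^sub>2)" using equilibrium_macro_total_pos[OF y] lt bx pos by linarith
  note foc_x = equilibrium_first_order[OF x Sx Mx] and foc_y = equilibrium_first_order[OF y Sy My]
  have G1: "marginal_payoff B\<^sub>1 x\<^sub>1 B\<^sub>2 x\<^sub>2 \<le> 0" "0 \<le> marginal_payoff B\<^sub>1 y\<^sub>1 B\<^sub>2 y\<^sub>2"
    using foc_x(1) foc_y(2) lt bx "by" by linarith+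
  show False
  proof (cases "y\<^sub>2 \<le> x\<^sub>2")
    case True
    \<comment> \<open>at \<open>y\<close> player 1 holds a larger share of a larger small-cell total and a smaller share of a smaller macro total\<close>
    have nonneg: "0 \<le> x\<^sub>1" "0 \<le> x\<^sub>2" "0 \<le> y\<^sub>2" using bx "by" pos by auto
    have "x\<^sub>1 * y\<^sub>2 \<le> y\<^sub>1 * x\<^sub>2" using True lt nonneg by (intro mult_mono) auto
    then have s: "x\<^sub>1 / (x\<^sub>1 + x\<^sub>2) \<le> y\<^sub>1 / (y\<^sub>1 + y\<^sub>2)"
      using Sx Sy by (simp add: divide_simps algebra_simps)
    have "(B\<^sub>1 - y\<^sub>1) * (B\<^sub>2 - x\<^sub>2) \<le> (B\<^sub>1 - x\<^sub>1) * (B\<^sub>2 - y\<^sub>2)"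
      using True lt bx "by" by (intro mult_mono) auto
    then have u: "(B\<^sub>1 - y\<^sub>1) / (B\<^sub>1 - y\<^sub>1 + (B\<^sub>2 - y\<^sub>2)) \<le> (B\<^sub>1 - x\<^sub>1) / (B\<^sub>1 - x\<^sub>1 + (B\<^sub>2 - x\<^sub>2))"
      using Mx My by (simp add: divide_simps algebra_simps)
    have "x\<^sub>1 + x\<^sub>2 < y\<^sub>1 + y\<^sub>2 \<or> x\<^sub>1 / (x\<^sub>1 + x\<^sub>2) < y\<^sub>1 / (y\<^sub>1 + y\<^sub>2)"
    proof (cases "x\<^sub>1 + x\<^sub>2 < y\<^sub>1 + y\<^sub>2")
      case False
      then have "x\<^sub>1 + x\<^sub>2 = y\<^sub>1 + y\<^sub>2" using le by linarith
      with lt Sx show ?thesis by (simp add: divide_strict_right_mono)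
    qed simp
    then have "marginal_payoff B\<^sub>1 y\<^sub>1 B\<^sub>2 y\<^sub>2 < marginal_payoff B\<^sub>1 x\<^sub>1 B\<^sub>2 x\<^sub>2"
      unfolding marginal_payoff_def
      using Sx le My Mx s u bx "by" nonneg by (intro marginal_of_shares_less) (auto simp: divide_simps)
    with G1 show False by linarith
  next
    case False
    \<comment> \<open>both players use more small-cell bandwidth at \<open>y\<close>, so the sum of their marginals drops\<close>
    have S: "x\<^sub>1 + x\<^sub>2 < y\<^sub>1 + y\<^sub>2" using False lt by linarith
    have "marginal_payoff B\<^sub>2 x\<^sub>2 B\<^sub>1 x\<^sub>1 \<le> 0" "0 \<le> marginal_payoff B\<^sub>2 y\<^sub>2 B\<^sub>1 y\<^sub>1"
      using foc_x(3) foc_y(4) False bx "by" by linarith+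
    moreover have "price_gap (B\<^sub>1 + B\<^sub>2) (y\<^sub>1 + y\<^sub>2) < price_gap (B\<^sub>1 + B\<^sub>2) (x\<^sub>1 + x\<^sub>2)"
      using Sx S My by (intro price_gap_strict_antimono) auto
    then have "(2 - a) * price_gap (B\<^sub>1 + B\<^sub>2) (y\<^sub>1 + y\<^sub>2) < (2 - a) * price_gap (B\<^sub>1 + B\<^sub>2) (x\<^sub>1 + x\<^sub>2)"
      using a_less_1 by (intro mult_strict_left_mono) auto
    ultimately show False
      using G1 marginal_payoff_sum[OF Sx Mx] marginal_payoff_sum[OF Sy My] by linarith
  qed
qed

lemma equilibrium_unique:
  assumes x: "equilibrium B\<^sub>1 B\<^sub>2 L\<^sub>1 L\<^sub>2 x\<^sub>1 x\<^sub>2" and y: "equilibrium B\<^sub>1 B\<^sub>2 L\<^sub>1 L\<^sub>2 y\<^sub>1 y\<^sub>2"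
    and pos: "0 < B\<^sub>1" "0 < B\<^sub>2" "0 \<le> L\<^sub>1" "0 \<le> L\<^sub>2"
  shows "x\<^sub>1 = y\<^sub>1 \<and> x\<^sub>2 = y\<^sub>2"
proof -
  have *: "x\<^sub>1 = y\<^sub>1 \<and> x\<^sub>2 = y\<^sub>2"
    if x: "equilibrium B\<^sub>1 B\<^sub>2 L\<^sub>1 L\<^sub>2 x\<^sub>1 x\<^sub>2" and y: "equilibrium B\<^sub>1 B\<^sub>2 L\<^sub>1 L\<^sub>2 y\<^sub>1 y\<^sub>2"
      and le: "x\<^sub>1 + x\<^sub>2 \<le> y\<^sub>1 + y\<^sub>2" for x\<^sub>1 x\<^sub>2 y\<^sub>1 y\<^sub>2
  proof -
    have "y\<^sub>1 \<le> x\<^sub>1" using equilibrium_total_le_imp_share_ge[OF x y pos le] .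
    moreover have "y\<^sub>2 \<le> x\<^sub>2"
      using equilibrium_total_le_imp_share_ge[of B\<^sub>2 B\<^sub>1 L\<^sub>2 L\<^sub>1 x\<^sub>2 x\<^sub>1 y\<^sub>2 y\<^sub>1] x y pos le equilibrium_swap
      by (simp add: add.commute)
    ultimately show ?thesis using le by linarith
  qed
  show ?thesis
  proof (cases "x\<^sub>1 + x\<^sub>2 \<le> y\<^sub>1 + y\<^sub>2")
    case False
    then have "y\<^sub>1 + y\<^sub>2 \<le> x\<^sub>1 + x\<^sub>2" by linarith
    with *[OF y x] show ?thesis by simp
  qed (use *[OF x y] in simp)
qed

lemma marginal_payoff_saturated_rival:
  assumes "x < B"
  shows "marginal_payoff B x B' B'
    = (1 - a * (x / (x + B'))) * (cS * (x + B') powr (-a)) - (1 - a) * (cM * (B - x) powr (-a))"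
proof -
  have "(B - x) / (B - x + (B' - B')) = 1" using assms by simp
  then show ?thesis unfolding marginal_payoff_def marginal_of_shares_def by simp
qed

lemma marginal_payoff_vs_saturated_rival:
  assumes "0 \<le> x" "x < B" "0 \<le> B'" "0 < x + B'"
  shows "(1 - a) * price_gap (B + B') (x + B') \<le> marginal_payoff B x B' B'"
proof -
  have "x / (x + B') \<le> 1" using assms by simp
  then have "a * (x / (x + B')) \<le> a" using a_pos by (intro mult_left_le) auto
  then have "(1 - a) * (cS * (x + B') powr (-a)) \<le> (1 - a * (x / (x + B'))) * (cS * (x + B') powr (-a))"
    using cS_pos by (intro mult_right_mono) auto
  moreover have "B + B' - (x + B') = B - x" by simp
  ultimately show ?thesis
    using marginal_payoff_saturated_rival[OF assms(2)] unfolding price_gap_def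
    by (simp add: right_diff_distrib)
qed

text \<open>Below full small-cell use, an equilibrium never has small cells priced above macro-cells: some
  player could still grow its small-cell bandwidth, and its marginal revenue is at least
  \<open>(1 - a)\<close> times the price gap, or both can and the sum of their marginals is \<open>(2 - a)\<close> times it.\<close>

lemma equilibrium_price_gap_nonpos:
  assumes x: "equilibrium B\<^sub>1 B\<^sub>2 L\<^sub>1 L\<^sub>2 x\<^sub>1 x\<^sub>2"
    and pos: "0 < B\<^sub>1" "0 < B\<^sub>2" "0 \<le> L\<^sub>1" "0 \<le> L\<^sub>2" and lt: "x\<^sub>1 + x\<^sub>2 < B\<^sub>1 + B\<^sub>2"
  shows "price_gap (B\<^sub>1 + B\<^sub>2) (x\<^sub>1 + x\<^sub>2) \<le> 0"
proof (rule ccontr)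
  assume gap: "\<not> ?thesis"
  have bx: "0 \<le> x\<^sub>1" "x\<^sub>1 \<le> B\<^sub>1" "0 \<le> x\<^sub>2" "x\<^sub>2 \<le> B\<^sub>2" using x pos unfolding equilibrium_def by auto
  have S: "0 < x\<^sub>1 + x\<^sub>2" using equilibrium_small_total_pos x pos by auto
  have M: "0 < B\<^sub>1 - x\<^sub>1 + (B\<^sub>2 - x\<^sub>2)" using lt by linarith
  note foc = equilibrium_first_order[OF x S M]
  have gap_pos: "0 < (1 - a) * price_gap (B\<^sub>1 + B\<^sub>2) (x\<^sub>1 + x\<^sub>2)" "0 < (2 - a) * price_gap (B\<^sub>1 + B\<^sub>2) (x\<^sub>1 + x\<^sub>2)"
    using gap a_less_1 by simp_all
  consider "x\<^sub>1 = B\<^sub>1" | "x\<^sub>2 = B\<^sub>2" | "x\<^sub>1 < B\<^sub>1" "x\<^sub>2 < B\<^sub>2" using bx by linarith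
  then show False
  proof cases
    case 1
    then have "(1 - a) * price_gap (B\<^sub>2 + B\<^sub>1) (x\<^sub>2 + B\<^sub>1) \<le> marginal_payoff B\<^sub>2 x\<^sub>2 B\<^sub>1 B\<^sub>1"
      using bx lt S by (intro marginal_payoff_vs_saturated_rival) auto
    then have "(1 - a) * price_gap (B\<^sub>1 + B\<^sub>2) (x\<^sub>1 + x\<^sub>2) \<le> marginal_payoff B\<^sub>2 x\<^sub>2 B\<^sub>1 B\<^sub>1"
      using 1 by (simp add: add.commute)
    moreover have "marginal_payoff B\<^sub>2 x\<^sub>2 B\<^sub>1 B\<^sub>1 \<le> 0"
      using foc(3) 1 lt by simp
    ultimately show False using gap_pos by linarith
  next
    case 2
    then have "(1 - a) * price_gap (B\<^sub>1 + B\<^sub>2) (x\<^sub>1 + B\<^sub>2) \<le> marginal_payoff B\<^sub>1 x\<^sub>1 B\<^sub>2 B\<^sub>2"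
      using bx lt S by (intro marginal_payoff_vs_saturated_rival) auto
    then have "(1 - a) * price_gap (B\<^sub>1 + B\<^sub>2) (x\<^sub>1 + x\<^sub>2) \<le> marginal_payoff B\<^sub>1 x\<^sub>1 B\<^sub>2 B\<^sub>2"
      using 2 by simp
    moreover have "marginal_payoff B\<^sub>1 x\<^sub>1 B\<^sub>2 B\<^sub>2 \<le> 0"
      using foc(1) 2 lt by simp
    ultimately show False using gap_pos by linarith
  next
    case 3
    then show False using foc(1,3) marginal_payoff_sum[OF S M] gap_pos by simp
  qed
qed

lemma equilibrium_total_ge_balance:
  assumes x: "equilibrium B\<^sub>1 B\<^sub>2 L\<^sub>1 L\<^sub>2 x\<^sub>1 x\<^sub>2"
    and pos: "0 < B\<^sub>1" "0 < B\<^sub>2" "0 \<le> L\<^sub>1" "0 \<le> L\<^sub>2"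
    and balance: "price_gap (B\<^sub>1 + B\<^sub>2) S = 0" "S < B\<^sub>1 + B\<^sub>2"
  shows "S \<le> x\<^sub>1 + x\<^sub>2"
proof (rule ccontr)
  assume "\<not> ?thesis"
  moreover have "0 < x\<^sub>1 + x\<^sub>2" using equilibrium_small_total_pos x pos by auto
  ultimately have "price_gap (B\<^sub>1 + B\<^sub>2) S < price_gap (B\<^sub>1 + B\<^sub>2) (x\<^sub>1 + x\<^sub>2)"
    using balance by (intro price_gap_strict_antimono) auto
  with balance equilibrium_price_gap_nonpos[OF x pos] \<open>\<not> S \<le> x\<^sub>1 + x\<^sub>2\<close> show False by linarith
qed

text \<open>For a fixed small-cell total \<open>S\<close>, a player's marginal payoff is affine in its own
  small-cell bandwidth, with slope \<open>- slope T S\<close> and root \<open>foc_root T B S\<close>.\<close>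

definition slope :: "real \<Rightarrow> real \<Rightarrow> real" where
  "slope T S = a * (cS * S powr (-a) / S + cM * (T - S) powr (-a) / (T - S))"

definition foc_root :: "real \<Rightarrow> real \<Rightarrow> real \<Rightarrow> real" where
  "foc_root T B S = (price_gap T S + a * B * (cM * (T - S) powr (-a)) / (T - S)) / slope T S"

lemma slope_pos: "0 < S \<Longrightarrow> S < T \<Longrightarrow> 0 < slope T S"
  unfolding slope_def using a_pos cS_pos cM_pos by (intro mult_pos_pos add_pos_pos divide_pos_pos) auto

lemma marginal_payoff_eq_foc_root:
  assumes "0 < x + x'" "x + x' < B + B'"
  shows "marginal_payoff B x B' x' = slope (B + B') (x + x') * (foc_root (B + B') B (x + x') - x)"
proof -
  define S T where "S = x + x'" and "T = B + B'"
  have S: "0 < S" "S < T" using assms unfolding S_def T_def by auto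
  have macro: "B - x + (B' - x') = T - S" unfolding S_def T_def by simp
  have "slope T S * (foc_root T B S - x) = slope T S * foc_root T B S - slope T S * x"
    by (simp add: right_diff_distrib)
  also have "\<dots> = price_gap T S + a * B * (cM * (T - S) powr (-a)) / (T - S) - slope T S * x"
    unfolding foc_root_def using slope_pos[OF S] by simp
  also have "\<dots> = marginal_of_shares S (T - S) (x / S) ((B - x) / (T - S))"
  proof -
    define M p q where "M = T - S" and "p = cS * S powr (-a)" and "q = cM * M powr (-a)"
    have "0 < M" using S unfolding M_def by simp
    with S show ?thesis
      unfolding slope_def price_gap_def marginal_of_shares_def M_def[symmetric]
        p_def[symmetric] q_def[symmetric]
      by (simp add: field_simps)
  qed
  finally show ?thesis
    unfolding marginal_payoff_def macro S_def[symmetric] T_def[symmetric] by simp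
qed

lemma continuous_on_foc_root:
  assumes "0 < lo" "hi < T"
  shows "continuous_on {lo..hi} (foc_root T B)"
proof -
  have "slope T S \<noteq> 0" if "S \<in> {lo..hi}" for S
    using slope_pos[of S T] that assms by auto
  with assms show ?thesis
    unfolding foc_root_def slope_def price_gap_def by (intro continuous_intros) auto
qed

definition clamped_root :: "real \<Rightarrow> real \<Rightarrow> real \<Rightarrow> real \<Rightarrow> real" where
  "clamped_root T L B S = max L (min B (foc_root T B S))"

lemma equilibrium_if_clamped_fixed_point:
  assumes "0 \<le> L\<^sub>1" "L\<^sub>1 \<le> B\<^sub>1" "0 \<le> L\<^sub>2" "L\<^sub>2 \<le> B\<^sub>2" "0 < S" "S < B\<^sub>1 + B\<^sub>2"
    and x\<^sub>1: "x\<^sub>1 = clamped_root (B\<^sub>1 + B\<^sub>2) L\<^sub>1 B\<^sub>1 S" and x\<^sub>2: "x\<^sub>2 = clamped_root (B\<^sub>1 + B\<^sub>2) L\<^sub>2 B\<^sub>2 S"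
    and sum: "x\<^sub>1 + x\<^sub>2 = S"
  shows "equilibrium B\<^sub>1 B\<^sub>2 L\<^sub>1 L\<^sub>2 x\<^sub>1 x\<^sub>2"
proof -
  define T where "T = B\<^sub>1 + B\<^sub>2"
  have D: "0 < slope T S" using slope_pos assms unfolding T_def by auto
  have c1: "L\<^sub>1 \<le> x\<^sub>1" "x\<^sub>1 \<le> B\<^sub>1" "x\<^sub>1 < B\<^sub>1 \<Longrightarrow> foc_root T B\<^sub>1 S \<le> x\<^sub>1" "L\<^sub>1 < x\<^sub>1 \<Longrightarrow> x\<^sub>1 \<le> foc_root T B\<^sub>1 S"
    using assms unfolding x\<^sub>1 clamped_root_def T_def by auto
  have c2: "L\<^sub>2 \<le> x\<^sub>2" "x\<^sub>2 \<le> B\<^sub>2" "x\<^sub>2 < B\<^sub>2 \<Longrightarrow> foc_root T B\<^sub>2 S \<le> x\<^sub>2" "L\<^sub>2 < x\<^sub>2 \<Longrightarrow> x\<^sub>2 \<le> foc_root T B\<^sub>2 S"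
    using assms unfolding x\<^sub>2 clamped_root_def T_def by auto
  have G1: "marginal_payoff B\<^sub>1 x\<^sub>1 B\<^sub>2 x\<^sub>2 = slope T S * (foc_root T B\<^sub>1 S - x\<^sub>1)"
    using marginal_payoff_eq_foc_root[of x\<^sub>1 x\<^sub>2 B\<^sub>1 B\<^sub>2] sum assms unfolding T_def by simp
  have G2: "marginal_payoff B\<^sub>2 x\<^sub>2 B\<^sub>1 x\<^sub>1 = slope T S * (foc_root T B\<^sub>2 S - x\<^sub>2)"
    using marginal_payoff_eq_foc_root[of x\<^sub>2 x\<^sub>1 B\<^sub>2 B\<^sub>1] sum assms unfolding T_def by (simp add: add.commute)
  have "\<forall>y\<in>{L\<^sub>1..B\<^sub>1}. payoff B\<^sub>1 y B\<^sub>2 x\<^sub>2 \<le> payoff B\<^sub>1 x\<^sub>1 B\<^sub>2 x\<^sub>2"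
  proof (rule payoff_max_if_first_order)
    show "x\<^sub>1 < B\<^sub>1 \<Longrightarrow> marginal_payoff B\<^sub>1 x\<^sub>1 B\<^sub>2 x\<^sub>2 \<le> 0"
      using G1 D c1 by (simp add: mult_nonneg_nonpos)
    show "L\<^sub>1 < x\<^sub>1 \<Longrightarrow> 0 \<le> marginal_payoff B\<^sub>1 x\<^sub>1 B\<^sub>2 x\<^sub>2" using G1 D c1 by simp
  qed (use assms c1 c2 sum in auto)
  moreover have "\<forall>y\<in>{L\<^sub>2..B\<^sub>2}. payoff B\<^sub>2 y B\<^sub>1 x\<^sub>1 \<le> payoff B\<^sub>2 x\<^sub>2 B\<^sub>1 x\<^sub>1"
  proof (rule payoff_max_if_first_order)
    show "x\<^sub>2 < B\<^sub>2 \<Longrightarrow> marginal_payoff B\<^sub>2 x\<^sub>2 B\<^sub>1 x\<^sub>1 \<le> 0"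
      using G2 D c2 by (simp add: mult_nonneg_nonpos)
    show "L\<^sub>2 < x\<^sub>2 \<Longrightarrow> 0 \<le> marginal_payoff B\<^sub>2 x\<^sub>2 B\<^sub>1 x\<^sub>1" using G2 D c2 by simp
  qed (use assms c1 c2 sum in auto)
  ultimately show ?thesis unfolding equilibrium_def using c1 c2 by blast
qed

lemma exists_total_below_clamped_roots:
  assumes "0 < B\<^sub>1" "0 < B\<^sub>2" "0 \<le> L\<^sub>1" "0 \<le> L\<^sub>2"
  obtains t where "0 < t" "t < min B\<^sub>1 B\<^sub>2"
    "t < clamped_root (B\<^sub>1 + B\<^sub>2) L\<^sub>1 B\<^sub>1 t + clamped_root (B\<^sub>1 + B\<^sub>2) L\<^sub>2 B\<^sub>2 t"
proof -
  define T where "T = B\<^sub>1 + B\<^sub>2"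
  obtain t where t: "0 < t" "t < min B\<^sub>1 B\<^sub>2" "cM * (T / 2) powr (-a) / cS < t powr (-a)"
    using powr_neg_exceeds_near_zero[of a "min B\<^sub>1 B\<^sub>2"] a_pos assms by auto
  have tT: "T / 2 < T - t" "t < T" using t unfolding T_def by auto
  have "cM * (T - t) powr (-a) < cM * (T / 2) powr (-a)"
    using tT t cM_pos a_pos by (intro mult_strict_left_mono powr_less_mono2_neg) auto
  also have "\<dots> < cS * t powr (-a)" using t cS_pos by (simp add: field_simps)
  finally have "0 < (2 - a) * price_gap T t"
    using a_less_1 unfolding price_gap_def by simp
  moreover have "marginal_payoff B\<^sub>1 0 B\<^sub>2 t = slope T t * (foc_root T B\<^sub>1 t - 0)"
    "marginal_payoff B\<^sub>2 t B\<^sub>1 0 = slope T t * (foc_root T B\<^sub>2 t - t)"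
    using marginal_payoff_eq_foc_root[of 0 t B\<^sub>1 B\<^sub>2] marginal_payoff_eq_foc_root[of t 0 B\<^sub>2 B\<^sub>1] t tT
    unfolding T_def by (simp_all add: add.commute)
  moreover have "marginal_payoff B\<^sub>1 0 B\<^sub>2 t + marginal_payoff B\<^sub>2 t B\<^sub>1 0 = (2 - a) * price_gap T t"
    using marginal_payoff_sum[of 0 t B\<^sub>1 B\<^sub>2] t tT unfolding T_def by simp
  ultimately have "0 < slope T t * (foc_root T B\<^sub>1 t + foc_root T B\<^sub>2 t - t)"
    by (simp add: algebra_simps)
  then have "t < foc_root T B\<^sub>1 t + foc_root T B\<^sub>2 t"
    using slope_pos[of t T] t tT by (simp add: zero_less_mult_iff)
  with t assms show ?thesis
    using that unfolding clamped_root_def T_def[symmetric] by (auto simp: min_def max_def split: if_splits)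
qed

lemma exists_total_above_clamped_roots:
  assumes "0 < B\<^sub>1" "0 < B\<^sub>2" "L\<^sub>1 \<le> B\<^sub>1" "L\<^sub>2 \<le> B\<^sub>2" and room: "L\<^sub>1 + L\<^sub>2 < B\<^sub>1 + B\<^sub>2"
  obtains S where "(B\<^sub>1 + B\<^sub>2) / 2 < S" "S < B\<^sub>1 + B\<^sub>2"
    "clamped_root (B\<^sub>1 + B\<^sub>2) L\<^sub>1 B\<^sub>1 S + clamped_root (B\<^sub>1 + B\<^sub>2) L\<^sub>2 B\<^sub>2 S \<le> S"
proof -
  define T where "T = B\<^sub>1 + B\<^sub>2"
  obtain m where m: "0 < m" "m < min (min B\<^sub>1 B\<^sub>2) (T - (L\<^sub>1 + L\<^sub>2))"
    "cS * (T / 2) powr (-a) / (cM * (1 - a)) < m powr (-a)"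
    using powr_neg_exceeds_near_zero[of a "min (min B\<^sub>1 B\<^sub>2) (T - (L\<^sub>1 + L\<^sub>2))"] a_pos assms
    unfolding T_def by auto
  define S where "S = T - m"
  have S: "T / 2 < S" "S < T" "L\<^sub>1 + L\<^sub>2 < S" using m unfolding S_def T_def by auto
  have "cS * S powr (-a) < cS * (T / 2) powr (-a)"
    using S cS_pos a_pos by (intro mult_strict_left_mono powr_less_mono2_neg) auto
  also have "\<dots> < (1 - a) * (cM * m powr (-a))" using m cM_pos a_less_1 by (simp add: field_simps)
  finally have gap: "cS * S powr (-a) < (1 - a) * (cM * m powr (-a))" .
  have root: "foc_root T B S < B - m" if "m < B" "B + B' = T" "0 \<le> B'" for B B'
  proof -
    have e: "B - m + B' = S" using that unfolding S_def by simp
    have "marginal_payoff B (B - m) B' B'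
        = slope (B + B') (B - m + B') * (foc_root (B + B') B (B - m + B') - (B - m))"
      using that S e by (intro marginal_payoff_eq_foc_root) auto
    then have "marginal_payoff B (B - m) B' B' = slope T S * (foc_root T B S - (B - m))"
      unfolding e that(2) .
    moreover have "marginal_payoff B (B - m) B' B'
        = (1 - a * ((B - m) / S)) * (cS * S powr (-a)) - (1 - a) * (cM * m powr (-a))"
      using marginal_payoff_saturated_rival[of "B - m" B B'] that m unfolding e by simp
    moreover have "(1 - a * ((B - m) / S)) * (cS * S powr (-a)) \<le> cS * S powr (-a)"
    proof (rule mult_left_le_one_le)
      have "0 \<le> (B - m) / S" "(B - m) / S \<le> 1" using that m S e by auto
      then have "0 \<le> a * ((B - m) / S)" "a * ((B - m) / S) \<le> 1"
        using a_pos a_less_1 by (simp_all only: mult_nonneg_nonneg mult_le_one less_imp_le)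
      then show "0 \<le> 1 - a * ((B - m) / S)" "1 - a * ((B - m) / S) \<le> 1" by linarith+
    qed (use cS_pos in simp)
    ultimately have "slope T S * (foc_root T B S - (B - m)) < 0" using gap by linarith
    with slope_pos[of S T] S m show ?thesis by (simp add: mult_less_0_iff)
  qed
  have "clamped_root T L\<^sub>1 B\<^sub>1 S \<le> max L\<^sub>1 (B\<^sub>1 - m)" "clamped_root T L\<^sub>2 B\<^sub>2 S \<le> max L\<^sub>2 (B\<^sub>2 - m)"
    using root[of B\<^sub>1 B\<^sub>2] root[of B\<^sub>2 B\<^sub>1] m assms unfolding clamped_root_def T_def by auto
  then have "clamped_root T L\<^sub>1 B\<^sub>1 S + clamped_root T L\<^sub>2 B\<^sub>2 S \<le> S"
    using S m assms unfolding S_def T_def by (auto simp: max_def split: if_splits)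
  with S that show ?thesis unfolding T_def by blast
qed

lemma equilibrium_exists:
  assumes "0 < B\<^sub>1" "0 < B\<^sub>2" "0 \<le> L\<^sub>1" "L\<^sub>1 \<le> B\<^sub>1" "0 \<le> L\<^sub>2" "L\<^sub>2 \<le> B\<^sub>2"
  obtains x\<^sub>1 x\<^sub>2 where "equilibrium B\<^sub>1 B\<^sub>2 L\<^sub>1 L\<^sub>2 x\<^sub>1 x\<^sub>2"
proof (cases "L\<^sub>1 + L\<^sub>2 < B\<^sub>1 + B\<^sub>2")
  case False
  then have "L\<^sub>1 = B\<^sub>1" "L\<^sub>2 = B\<^sub>2" using assms by auto
  then show ?thesis using that unfolding equilibrium_def by auto
next
  case True
  define T where "T = B\<^sub>1 + B\<^sub>2"
  define f where "f S = clamped_root T L\<^sub>1 B\<^sub>1 S + clamped_root T L\<^sub>2 B\<^sub>2 S - S" for S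
  obtain t where t: "0 < t" "t < min B\<^sub>1 B\<^sub>2" "t < clamped_root T L\<^sub>1 B\<^sub>1 t + clamped_root T L\<^sub>2 B\<^sub>2 t"
    using exists_total_below_clamped_roots assms unfolding T_def by metis
  obtain S\<^sub>h where S\<^sub>h: "T / 2 < S\<^sub>h" "S\<^sub>h < T" "clamped_root T L\<^sub>1 B\<^sub>1 S\<^sub>h + clamped_root T L\<^sub>2 B\<^sub>2 S\<^sub>h \<le> S\<^sub>h"
    using exists_total_above_clamped_roots assms True unfolding T_def by metis
  have "t \<le> S\<^sub>h" using t S\<^sub>h unfolding T_def by auto
  moreover have "continuous_on {t..S\<^sub>h} f"
    unfolding f_def clamped_root_def
    using continuous_on_foc_root[of t S\<^sub>h T] t S\<^sub>h by (intro continuous_intros) auto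
  ultimately obtain S where S: "t \<le> S" "S \<le> S\<^sub>h" "f S = 0"
    using IVT2'[of f S\<^sub>h 0 t] t S\<^sub>h unfolding f_def by auto
  show ?thesis
  proof (rule that, rule equilibrium_if_clamped_fixed_point)
    show "clamped_root (B\<^sub>1 + B\<^sub>2) L\<^sub>1 B\<^sub>1 S + clamped_root (B\<^sub>1 + B\<^sub>2) L\<^sub>2 B\<^sub>2 S = S"
      using S unfolding f_def T_def by simp
  qed (use assms t S S\<^sub>h in \<open>auto simp: T_def\<close>)
qed

end

locale bandwidth_market =
  fixes alpha Nm Nf R0 lamS :: real
  assumes alpha_pos: "0 < alpha" and alpha_less_1: "alpha < 1"
    and Nm_pos: "0 < Nm" and Nf_pos: "0 < Nf" and R0_pos: "0 < R0" and lamS_pos: "0 < lamS"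
begin

sublocale bandwidth_game alpha "(R0 / Nm) powr (-alpha)" "lamS * (lamS * R0 / Nf) powr (-alpha)"
  using alpha_pos alpha_less_1 Nm_pos Nf_pos R0_pos lamS_pos by unfold_locales auto

lemma revenue_eq_scaled_payoff:
  "revenue alpha R0 lamS (rate_M Nm R0 B B' y x') (rate_S Nf R0 lamS y x') (B - y) y
    = R0 * payoff B y B' x'"
proof -
  have rates: "rate_M Nm R0 B B' y x' = (B - y + (B' - x')) * (R0 / Nm)"
    "rate_S Nf R0 lamS y x' = (y + x') * (lamS * R0 / Nf)"
    unfolding rate_M_def rate_S_def by simp_all
  show ?thesis
    unfolding revenue_def payoff_def rates powr_mult by (simp add: algebra_simps)
qed

lemma is_NE_iff_equilibrium:
  "is_NE alpha Nm Nf R0 lamS B\<^sub>1 B\<^sub>2 B\<^sub>1\<^sub>0 B\<^sub>2\<^sub>0 (x\<^sub>1, x\<^sub>2) \<longleftrightarrow> equilibrium B\<^sub>1 B\<^sub>2 B\<^sub>1\<^sub>0 B\<^sub>2\<^sub>0 x\<^sub>1 x\<^sub>2"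
proof -
  have "payoff1 alpha Nm Nf R0 lamS B\<^sub>1 B\<^sub>2 y x\<^sub>2 = R0 * payoff B\<^sub>1 y B\<^sub>2 x\<^sub>2" for y x\<^sub>2
    unfolding payoff1_def by (rule revenue_eq_scaled_payoff)
  moreover have "payoff2 alpha Nm Nf R0 lamS B\<^sub>1 B\<^sub>2 x\<^sub>1 y = R0 * payoff B\<^sub>2 y B\<^sub>1 x\<^sub>1" for y x\<^sub>1
  proof -
    have "rate_M Nm R0 B\<^sub>1 B\<^sub>2 x\<^sub>1 y = rate_M Nm R0 B\<^sub>2 B\<^sub>1 y x\<^sub>1" "rate_S Nf R0 lamS x\<^sub>1 y = rate_S Nf R0 lamS y x\<^sub>1"
      unfolding rate_M_def rate_S_def by (simp_all add: algebra_simps)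
    then show ?thesis
      unfolding payoff2_def by (simp add: revenue_eq_scaled_payoff)
  qed
  ultimately show ?thesis
    using R0_pos unfolding is_NE_def equilibrium_def by auto
qed

lemma B_free_sum:
  "B_free alpha Nm Nf lamS B\<^sub>1 + B_free alpha Nm Nf lamS B\<^sub>2
    = eps_param alpha lamS * Nf * (B\<^sub>1 + B\<^sub>2) / (eps_param alpha lamS * Nf + Nm)"
  unfolding B_free_def by (simp add: add_divide_distrib[symmetric] algebra_simps)

lemma lamS_eps_param_balance:
  "lamS * (lamS * eps_param alpha lamS) powr (-alpha) = 1"
proof -
  have "(1 / alpha - 1) * (-alpha) = alpha - 1" using alpha_pos by (simp add: field_simps)
  then have "eps_param alpha lamS powr (-alpha) = lamS powr (alpha - 1)"
    unfolding eps_param_def by (simp add: powr_powr)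
  then have "(lamS * eps_param alpha lamS) powr (-alpha) = lamS powr (-alpha) * lamS powr (alpha - 1)"
    by (simp add: powr_mult)
  also have "\<dots> = lamS powr (-1)" by (simp add: powr_add[symmetric])
  finally show ?thesis using lamS_pos by (simp add: powr_minus)
qed

lemma price_gap_free_total:
  assumes "0 < T"
  defines "S \<equiv> eps_param alpha lamS * Nf * T / (eps_param alpha lamS * Nf + Nm)"
  shows "price_gap T S = 0" "0 < S" "S < T"
proof -
  define \<epsilon> E where "\<epsilon> = eps_param alpha lamS" and "E = \<epsilon> * Nf + Nm"
  have pos: "0 < \<epsilon>" "0 < E"
    unfolding \<epsilon>_def E_def eps_param_def using lamS_pos Nf_pos Nm_pos by (auto intro: add_pos_pos)
  have S: "S = \<epsilon> * Nf * T / E" unfolding S_def \<epsilon>_def E_def ..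
  show "0 < S" "S < T" unfolding S using pos assms Nf_pos Nm_pos by (simp_all add: E_def field_simps)
  have "(lamS * R0 / Nf) * S = (lamS * \<epsilon>) * (R0 * T / E)" "(R0 / Nm) * (T - S) = R0 * T / E"
    unfolding S using pos Nf_pos Nm_pos by (simp_all add: E_def field_simps)
  then have "lamS * (lamS * R0 / Nf) powr (-alpha) * S powr (-alpha)
      = lamS * (lamS * \<epsilon>) powr (-alpha) * (R0 * T / E) powr (-alpha)"
    "(R0 / Nm) powr (-alpha) * (T - S) powr (-alpha) = (R0 * T / E) powr (-alpha)"
    by (metis mult.assoc powr_mult)+
  then show "price_gap T S = 0"
    unfolding price_gap_def using lamS_eps_param_balance by (simp add: \<epsilon>_def)
qed

end

theorem theorem2:
  fixes alpha Nm Nf R0 lamS B1 B2 B10 B20 :: real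
  assumes "0 < alpha" "alpha < 1" "0 < Nm" "0 < Nf" "0 < R0" "1 < lamS"
    and "0 < B1" "0 < B2"
    and "0 \<le> B10" "B10 \<le> B1" "0 \<le> B20" "B20 \<le> B2"
  shows "(\<exists>!p. is_NE alpha Nm Nf R0 lamS B1 B2 B10 B20 p)
    \<and> (\<forall>p. is_NE alpha Nm Nf R0 lamS B1 B2 B10 B20 p \<longrightarrow>
          fst p + snd p \<ge> B_free alpha Nm Nf lamS B1 + B_free alpha Nm Nf lamS B2)
    \<and> B_free alpha Nm Nf lamS B1 + B_free alpha Nm Nf lamS B2
        = eps_param alpha lamS * Nf * (B1 + B2) / (eps_param alpha lamS * Nf + Nm)"
proof -
  interpret bandwidth_market alpha Nm Nf R0 lamS
    using assms by unfold_locales auto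
  have NE: "is_NE alpha Nm Nf R0 lamS B1 B2 B10 B20 p \<longleftrightarrow> equilibrium B1 B2 B10 B20 (fst p) (snd p)" for p
    using is_NE_iff_equilibrium[of B1 B2 B10 B20 "fst p" "snd p"] by simp
  obtain x1 x2 where x: "equilibrium B1 B2 B10 B20 x1 x2"
    using equilibrium_exists assms by blast
  have "\<exists>!p. is_NE alpha Nm Nf R0 lamS B1 B2 B10 B20 p"
  proof (rule ex1I[of _ "(x1, x2)"])
    fix p assume "is_NE alpha Nm Nf R0 lamS B1 B2 B10 B20 p"
    then show "p = (x1, x2)"
      using equilibrium_unique[OF _ x] NE assms by (simp add: prod_eq_iff)
  qed (use NE x in simp)
  moreover have "B_free alpha Nm Nf lamS B1 + B_free alpha Nm Nf lamS B2 \<le> fst p + snd p"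
    if "is_NE alpha Nm Nf R0 lamS B1 B2 B10 B20 p" for p
  proof -
    have "equilibrium B1 B2 B10 B20 (fst p) (snd p)" using that NE by blast
    from equilibrium_total_ge_balance[OF this] show ?thesis
      using price_gap_free_total[of "B1 + B2"] assms unfolding B_free_sum by simp
  qed
  ultimately show ?thesis using B_free_sum by blast
qed

end
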